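(* Let $K$ be a $d$-dimensional convex body with $o\in\mathrm{int}(K)$, let $\delta>0$, and let $\{v_i+\lambda_iK: i\in I\}$ be a pairwise intersecting family of positive homothets of $K$ such that $v_i\notin v_j+\lambda_j\,\mathrm{int}(K)$ for all distinct $i,j\in I$, and $\lambda_i\in[1,1+\delta)$ for each $i\in I$. Then $|I|\le P(K,2(1+\delta))$.
   Context: A convex body is a compact convex set with non-empty interior. For a convex body $L$ with $o\in\mathrm{int}(L)$, $\|x\|_L=\inf\{\mu>0:x\in\mu L\}$. $P(K,\lambda)$ is the maximum number of points $p_1,\dots,p_m$ such that $\max_{i<j}\|p_i-p_j\|_{\frac12(K-K)}\big/\min_{i<j}\|p_i-p_j\|_{K\cap-K}\le\lambda$. *)

theory Defs
  imports "HOL-Analysis.Analysis" "HOL-Library.Extended_Nat"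
begin

definition convex_body :: "'a::euclidean_space set \<Rightarrow> bool" where
  "convex_body K \<longleftrightarrow> compact K \<and> convex K \<and> interior K \<noteq> {}"

definition gauge_norm :: "'a::euclidean_space set \<Rightarrow> 'a \<Rightarrow> real" where
  "gauge_norm L x = Inf {\<mu>::real. \<mu> > 0 \<and> x \<in> (\<lambda>y. \<mu> *\<^sub>R y) ` L}"

definition half_diff_body :: "'a::euclidean_space set \<Rightarrow> 'a set" where
  "half_diff_body K = {(1/2) *\<^sub>R (a - b) | a b. a \<in> K \<and> b \<in> K}"

definition sym_body :: "'a::euclidean_space set \<Rightarrow> 'a set" where
  "sym_body K = K \<inter> uminus ` K"

definition ratio_ok :: "'a::euclidean_space set \<Rightarrow> real \<Rightarrow> 'a set \<Rightarrow> bool" where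
  "ratio_ok K lam S \<longleftrightarrow>
     (card S \<ge> 2 \<longrightarrow>
       Max {gauge_norm (half_diff_body K) (p - q) | p q. p \<in> S \<and> q \<in> S \<and> p \<noteq> q}
       / Min {gauge_norm (sym_body K) (p - q) | p q. p \<in> S \<and> q \<in> S \<and> p \<noteq> q} \<le> lam)"

definition P_num :: "'a::euclidean_space set \<Rightarrow> real \<Rightarrow> enat" where
  "P_num K lam = Sup {enat (card S) | S. finite S \<and> ratio_ok K lam S}"

definition homothet :: "'a::euclidean_space \<Rightarrow> real \<Rightarrow> 'a set \<Rightarrow> 'a set" where
  "homothet v t K = (\<lambda>x. v + t *\<^sub>R x) ` K"

end

theory Submission
  imports Defs
begin

text \<open>The two conditions on the family become bounds on the differences
  \<open>v i - v j\<close>. The homothets \<open>v i + \<lambda>\<^sub>i K\<close> and \<open>v j + \<lambda>\<^sub>j K\<close> meet, so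
  \<open>v i - v j = \<lambda>\<^sub>j b - \<lambda>\<^sub>i a\<close> with \<open>a, b \<in> K\<close>; since \<open>\<lambda>\<^sub>i, \<lambda>\<^sub>j < 1 + \<delta>\<close> and \<open>K\<close> is star-shaped
  about the origin, this is \<open>2(1 + \<delta>)\<close> times a point of \<open>(K - K)/2\<close>. On the other hand
  \<open>v i \<notin> v j + \<lambda>\<^sub>j int K\<close> with \<open>\<lambda>\<^sub>j \<ge> 1\<close> forces the gauge of \<open>v i - v j\<close> with respect to
  \<open>K\<close>, and hence with respect to the smaller body \<open>K \<inter> -K\<close>, to be at least \<open>1\<close>.
  So the centres of any finite subfamily are distinct points with distance ratio at most
  \<open>2(1 + \<delta>)\<close>.\<close>

lemma scaleR_mem_convex_zero:
  fixes K :: "'a::real_vector set"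
  assumes "convex K" "0 \<in> K" "0 \<le> t" "t \<le> 1" "x \<in> K"
  shows "t *\<^sub>R x \<in> K"
  using convexD[OF assms(1) assms(5) assms(2), of t "1 - t"] assms(3,4) by simp

lemma scaleR_mem_interior_convex:
  fixes K :: "'a::euclidean_space set"
  assumes "convex K" "0 \<in> interior K" "0 < t" "t < 1" "x \<in> K"
  shows "t *\<^sub>R x \<in> interior K"
  using mem_interior_convex_shrink[OF assms(1,2,5), of "1 - t"] assms(3,4)
  by (simp add: algebra_simps)

lemma gauge_norm_le:
  assumes "0 < \<mu>" "x \<in> (\<lambda>y. \<mu> *\<^sub>R y) ` L"
  shows "gauge_norm L x \<le> \<mu>"
  unfolding gauge_norm_def using assms by (intro cInf_lower bdd_belowI[where m = 0]) auto

lemma gauge_norm_set_nonempty: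
  fixes L :: "'a::euclidean_space set"
  assumes "0 \<in> interior L"
  shows "\<exists>\<mu>>0. x \<in> (\<lambda>y. \<mu> *\<^sub>R y) ` L"
proof -
  obtain e where e: "0 < e" "ball 0 e \<subseteq> L"
    using assms mem_interior by blast
  define \<mu> where "\<mu> = 2 * (norm x + 1) / e"
  have \<mu>: "0 < \<mu>"
    using e by (simp add: \<mu>_def add_nonneg_pos)
  have "norm ((1 / \<mu>) *\<^sub>R x) = e * norm x / (2 * (norm x + 1))"
    using e by (simp add: \<mu>_def)
  also have "\<dots> < e"
    using e by (simp add: divide_less_eq add_nonneg_pos)
  finally have "(1 / \<mu>) *\<^sub>R x \<in> L"
    using e by auto
  moreover have "x = \<mu> *\<^sub>R ((1 / \<mu>) *\<^sub>R x)"
    using \<mu> by simp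
  ultimately show ?thesis
    using \<mu> by blast
qed

lemma gauge_norm_ge_outside_interior:
  fixes K L :: "'a::euclidean_space set"
  assumes "convex K" "0 \<in> interior L" "L \<subseteq> K" "0 < l"
    and x: "x \<notin> (\<lambda>y. l *\<^sub>R y) ` interior K"
  shows "l \<le> gauge_norm L x"
  unfolding gauge_norm_def
proof (rule cInf_greatest)
  show "{\<mu>. 0 < \<mu> \<and> x \<in> (\<lambda>y. \<mu> *\<^sub>R y) ` L} \<noteq> {}"
    using gauge_norm_set_nonempty[OF assms(2)] by blast
next
  have K0: "0 \<in> interior K"
    using assms(2,3) interior_mono by blast
  fix \<mu> assume "\<mu> \<in> {\<mu>. 0 < \<mu> \<and> x \<in> (\<lambda>y. \<mu> *\<^sub>R y) ` L}"
  then obtain y where \<mu>: "0 < \<mu>" and y: "y \<in> K" and xy: "x = \<mu> *\<^sub>R y"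
    using assms(3) by blast
  show "l \<le> \<mu>"
  proof (rule ccontr)
    assume "\<not> l \<le> \<mu>"
    then have "(\<mu> / l) *\<^sub>R y \<in> interior K"
      using \<mu> y assms(4) by (intro scaleR_mem_interior_convex[OF assms(1) K0]) auto
    moreover have "x = l *\<^sub>R ((\<mu> / l) *\<^sub>R y)"
      using xy assms(4) by simp
    ultimately show False
      using x by blast
  qed
qed

lemma zero_in_interior_sym_body:
  fixes K :: "'a::euclidean_space set"
  assumes "0 \<in> interior K"
  shows "0 \<in> interior (sym_body K)"
proof -
  obtain e where e: "0 < e" "ball 0 e \<subseteq> K"
    using assms mem_interior by blast
  have "ball 0 e \<subseteq> uminus ` K"
  proof
    fix y assume "y \<in> ball (0::'a) e"
    then have "- y \<in> K"
      using e by auto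
    then show "y \<in> uminus ` K"
      by (metis image_eqI minus_minus)
  qed
  then show ?thesis
    using e unfolding sym_body_def mem_interior by blast
qed

lemma gauge_norm_half_diff_body_le:
  assumes "0 < c" "a \<in> K" "b \<in> K"
  shows "gauge_norm (half_diff_body K) (c *\<^sub>R (a - b)) \<le> 2 * c"
proof (rule gauge_norm_le)
  have "(1/2) *\<^sub>R (a - b) \<in> half_diff_body K"
    using assms by (auto simp: half_diff_body_def)
  moreover have "c *\<^sub>R (a - b) = (2 * c) *\<^sub>R ((1/2) *\<^sub>R (a - b))"
    by simp
  ultimately show "c *\<^sub>R (a - b) \<in> (\<lambda>y. (2 * c) *\<^sub>R y) ` half_diff_body K"
    by blast
qed (use assms in simp)

lemma ratio_ok_if_pairwise_bounds:
  fixes S :: "'a::euclidean_space set"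
  assumes "finite S" "0 \<le> C"
    and upper: "\<And>p q. p \<in> S \<Longrightarrow> q \<in> S \<Longrightarrow> p \<noteq> q \<Longrightarrow> gauge_norm (half_diff_body K) (p - q) \<le> C"
    and lower: "\<And>p q. p \<in> S \<Longrightarrow> q \<in> S \<Longrightarrow> p \<noteq> q \<Longrightarrow> 1 \<le> gauge_norm (sym_body K) (p - q)"
  shows "ratio_ok K C S"
  unfolding ratio_ok_def
proof
  let ?pairs = "{(p, q). p \<in> S \<and> q \<in> S \<and> p \<noteq> q}"
  define A where "A = {gauge_norm (half_diff_body K) (p - q) |p q. p \<in> S \<and> q \<in> S \<and> p \<noteq> q}"
  define B where "B = {gauge_norm (sym_body K) (p - q) |p q. p \<in> S \<and> q \<in> S \<and> p \<noteq> q}"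
  assume "2 \<le> card S"
  then obtain p q where "p \<in> S" "q \<in> S" "p \<noteq> q"
    by (metis One_nat_def Suc_1 card_le_Suc_iff insert_iff numeral_2_eq_2)
  then have ne: "A \<noteq> {}" "B \<noteq> {}"
    unfolding A_def B_def by blast+
  have "A = (\<lambda>(p, q). gauge_norm (half_diff_body K) (p - q)) ` ?pairs"
       "B = (\<lambda>(p, q). gauge_norm (sym_body K) (p - q)) ` ?pairs"
    unfolding A_def B_def by auto
  moreover have "finite ?pairs"
    using assms(1) by (auto intro: finite_subset[of _ "S \<times> S"])
  ultimately have fin: "finite A" "finite B"
    by simp_all
  have "Max A \<le> C"
    unfolding Max_le_iff[OF fin(1) ne(1)] using upper by (auto simp: A_def)
  moreover have "1 \<le> Min B"
    unfolding Min_ge_iff[OF fin(2) ne(2)] using lower by (auto simp: B_def)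
  ultimately have "Max A / Min B \<le> C / Min B" "C / Min B \<le> C"
    using assms(2) divide_left_mono[of 1 "Min B" C] by (auto intro: divide_right_mono)
  then show "Max A / Min B \<le> C"
    by linarith
qed

lemma card_le_P_num:
  assumes "finite S" "ratio_ok K lam S"
  shows "enat (card S) \<le> P_num K lam"
  unfolding P_num_def using assms by (intro Sup_upper) blast

lemma gauge_norm_diff_le_if_homothets_intersect:
  fixes K :: "'a::euclidean_space set"
  assumes "convex K" "0 \<in> K" "0 < \<Lambda>"
    and "0 \<le> s" "s \<le> \<Lambda>" "0 \<le> t" "t \<le> \<Lambda>"
    and "homothet u s K \<inter> homothet w t K \<noteq> {}"
  shows "gauge_norm (half_diff_body K) (u - w) \<le> 2 * \<Lambda>"
proof -
  obtain a b where a: "a \<in> K" and b: "b \<in> K" and meet: "u + s *\<^sub>R a = w + t *\<^sub>R b"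
    using assms(8) unfolding homothet_def by blast
  have "(t / \<Lambda>) *\<^sub>R b \<in> K" "(s / \<Lambda>) *\<^sub>R a \<in> K"
    using assms by (auto intro!: scaleR_mem_convex_zero a b)
  moreover have "u - w = \<Lambda> *\<^sub>R ((t / \<Lambda>) *\<^sub>R b - (s / \<Lambda>) *\<^sub>R a)"
    using meet assms(3) by (simp add: algebra_simps)
  ultimately show ?thesis
    using assms(3) gauge_norm_half_diff_body_le by metis
qed

lemma gauge_norm_sym_body_ge_if_not_in_homothet:
  fixes K :: "'a::euclidean_space set"
  assumes "convex K" "0 \<in> interior K" "1 \<le> t"
    and "u \<notin> homothet w t (interior K)"
  shows "1 \<le> gauge_norm (sym_body K) (u - w)"
proof -
  have "u - w \<notin> (\<lambda>y. t *\<^sub>R y) ` interior K"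
    using assms(4) unfolding homothet_def by (auto simp: algebra_simps)
  then have "t \<le> gauge_norm (sym_body K) (u - w)"
    using assms by (intro gauge_norm_ge_outside_interior zero_in_interior_sym_body)
      (auto simp: sym_body_def)
  then show ?thesis
    using assms(3) by linarith
qed

theorem lemma19:
  fixes K :: "'a::euclidean_space set"
    and I :: "'i set"
    and v :: "'i \<Rightarrow> 'a"
    and lam :: "'i \<Rightarrow> real"
    and \<delta> :: real
  assumes "convex_body K"
    and "0 \<in> interior K"
    and "\<delta> > 0"
    and "\<forall>i\<in>I. \<forall>j\<in>I. homothet (v i) (lam i) K \<inter> homothet (v j) (lam j) K \<noteq> {}"
    and "\<forall>i\<in>I. \<forall>j\<in>I. i \<noteq> j \<longrightarrow> v i \<notin> homothet (v j) (lam j) (interior K)"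
    and "\<forall>i\<in>I. 1 \<le> lam i \<and> lam i < 1 + \<delta>"
  shows "\<forall>J\<subseteq>I. finite J \<longrightarrow> enat (card J) \<le> P_num K (2 * (1 + \<delta>))"
proof (intro allI impI)
  fix J assume J: "J \<subseteq> I" "finite J"
  have cvx: "convex K"
    using assms(1) by (simp add: convex_body_def)
  have centre_in_interior: "v i \<in> homothet (v i) (lam j) (interior K)" for i j
    using assms(2) unfolding homothet_def by (auto intro: image_eqI[where x = 0])
  have inj: "inj_on v J"
  proof (rule inj_onI, rule ccontr)
    fix i j assume "i \<in> J" "j \<in> J" "v i = v j" "i \<noteq> j"
    then show False
      using assms(5) J(1) centre_in_interior[of j j] by (metis subsetD)
  qed
  have "ratio_ok K (2 * (1 + \<delta>)) (v ` J)"
  proof (rule ratio_ok_if_pairwise_bounds)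
    fix p q assume "p \<in> v ` J" "q \<in> v ` J" "p \<noteq> q"
    then obtain i j where ij: "i \<in> I" "j \<in> I" "i \<noteq> j" and pq: "p = v i" "q = v j"
      using J(1) by blast
    have "0 \<in> K"
      using assms(2) interior_subset by blast
    then show "gauge_norm (half_diff_body K) (p - q) \<le> 2 * (1 + \<delta>)"
      unfolding pq using ij assms(3,4,6)
      by (intro gauge_norm_diff_le_if_homothets_intersect[OF cvx, where s = "lam i" and t = "lam j"]) auto
    show "1 \<le> gauge_norm (sym_body K) (p - q)"
      unfolding pq using ij assms(2,5,6)
      by (intro gauge_norm_sym_body_ge_if_not_in_homothet[OF cvx, where t = "lam j"]) auto
  qed (use J(2) assms(3) in auto)
  then show "enat (card J) \<le> P_num K (2 * (1 + \<delta>))"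
    using card_le_P_num[of "v ` J"] J(2) card_image[OF inj] by simp
qed

end
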